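(* Let $n\ge 2$ and for $a\in\{-1,1\}^n$ put $\pi(a)=|\{i\in\{1,\dots,n\}:a_i=1\}|-1$. Let $Q\subseteq\mathbb{R}^{n+1}$ be the set of $(x,x_{n+1})\in\mathbb{R}^n\times\mathbb{R}$ satisfying $ax-\pi(a)x_{n+1}\le 1$ for all $a\in\{-1,1\}^n$, together with $0\le x_{n+1}\le 2$. Then: (i) $Q$ is a polytope all of whose vertices are integral (its vertices with $x_{n+1}=0$ are $(\pm u_i,0)$ and those with $x_{n+1}=2$ are $(\mathbf{1}\pm(n-1)u_i,2)$, $u_i$ the unit vectors); (ii) $Q$ contains no integer point in its interior; (iii) for each of the $2^n+2$ defining inequalities there is an integer point of $Q$ satisfying this inequality with equality and all other defining inequalities strictly; in particular each defining inequality defines a facet of $Q$ containing an integer point in its relative interior.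
   Context: $\mathbf{1}$ denotes the all-ones vector in $\mathbb{R}^n$ and $u_1,\dots,u_n$ the standard unit vectors of $\mathbb{R}^n$. *)

theory Defs
  imports "HOL-Analysis.Analysis"
begin

definition signvecs :: "(real^'n) set" where
  "signvecs = {a. \<forall>i. a $ i = 1 \<or> a $ i = -1}"

definition piv :: "real^'n \<Rightarrow> real" where
  "piv a = real (card {i. a $ i = 1}) - 1"

definition lhs :: "real^'n \<Rightarrow> (real^'n) \<times> real \<Rightarrow> real" where
  "lhs a p = a \<bullet> fst p - piv a * snd p"

definition Qpoly :: "((real^'n) \<times> real) set" where
  "Qpoly = {p. (\<forall>a\<in>signvecs. lhs a p \<le> 1) \<and> 0 \<le> snd p \<and> snd p \<le> 2}"

definition integral_pt :: "(real^'n) \<times> real \<Rightarrow> bool" where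
  "integral_pt p \<longleftrightarrow> (\<forall>i. fst p $ i \<in> \<int>) \<and> snd p \<in> \<int>"

end

theory Submission
  imports Defs
begin

(* Write N = CARD('n) and, for a point p = (x,t), put centre p = x - (t/2)*1.
   Since pi(a) = (a.1 + N)/2 - 1 for a sign vector a, the inequality indexed by a reads
   a.(centre p) <= 1 + t(N-2)/2, and the maximum of a.w over sign vectors is the l1-norm of w.
   Hence the slice of Q at height t is an l1-ball (a cross-polytope) of radius 1 + t(N-2)/2
   centred at (t/2)*1.

   Hence Q is a polytope.
   (3) Each of these 4N points is strictly exposed by a linear functional, so they are exactly
       the extreme points of Q; they are integral.
   (4) The interior of Q is the set where all inequalities are strict; an integral point
       there would have height 1 and then violate the inequality of the sign vector of its
       centre, so there is none.
   (5) A general criterion for a hyperplane section of a full-dimensional convex set to be a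
       facet, applied with explicit integral witnesses ((a+1)/2,1), (0,0) and (1,2). *)

section \<open>Sign vectors, the l1-norm and the shape of Q\<close>

lemma finite_signvecs: "finite (signvecs :: (real^'n) set)"
proof -
  let ?F = "{f::'n \<Rightarrow> real. \<forall>x. (x \<in> UNIV \<longrightarrow> f x \<in> {1,-1}) \<and> (x \<notin> UNIV \<longrightarrow> f x = 0)}"
  have "finite ?F" by (rule finite_set_of_finite_funs) auto
  moreover have "(signvecs :: (real^'n) set) \<subseteq> vec_lambda ` ?F"
  proof
    fix a :: "real^'n" assume "a \<in> signvecs"
    then have "(\<lambda>i. a$i) \<in> ?F" by (auto simp: signvecs_def)
    moreover have "a = vec_lambda (\<lambda>i. a$i)" by simp
    ultimately show "a \<in> vec_lambda ` ?F" by blast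
  qed
  ultimately show ?thesis by (meson finite_imageI finite_subset)
qed

lemma signvec_nonzero: "a \<in> signvecs \<Longrightarrow> (a::real^'n) \<noteq> 0"
  by (force simp: signvecs_def vec_eq_iff)

definition l1norm :: "real^'n \<Rightarrow> real" where
  "l1norm w = (\<Sum>i\<in>UNIV. \<bar>w$i\<bar>)"

lemma l1norm_scaleR: "l1norm (c *\<^sub>R w) = \<bar>c\<bar> * l1norm (w::real^'n)"
  by (simp add: l1norm_def abs_mult sum_distrib_left)

lemma l1norm_uminus [simp]: "l1norm (- w) = l1norm (w::real^'n)"
  by (simp add: l1norm_def)

lemma l1norm_axis: "l1norm (axis i 1 :: real^'n) = 1"
  by (simp add: l1norm_def axis_def if_distrib sum.delta cong: if_cong)

definition sgnv :: "real^'n \<Rightarrow> real^'n" where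
  "sgnv w = (\<chi> i. if w$i \<ge> 0 then 1 else -1)"

lemma sgnv_signvec: "sgnv w \<in> signvecs"
  by (simp add: sgnv_def signvecs_def)

lemma sgnv_inner: "sgnv w \<bullet> w = l1norm w"
  by (simp add: inner_vec_def sgnv_def l1norm_def) (rule sum.cong, auto)

lemma signvec_inner_le:
  assumes "a \<in> signvecs" shows "a \<bullet> w \<le> l1norm w"
proof -
  have "a$i * w$i \<le> \<bar>w$i\<bar>" for i
  proof -
    have "a$i = 1 \<or> a$i = -1" using assms by (simp add: signvecs_def)
    then show ?thesis by auto
  qed
  then show ?thesis unfolding inner_vec_def l1norm_def by (intro sum_mono) auto
qed

lemma signvecs_bound_iff: "(\<forall>a\<in>signvecs. a \<bullet> w \<le> c) \<longleftrightarrow> l1norm (w::real^'n) \<le> c"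
  using sgnv_signvec[of w] sgnv_inner[of w] signvec_inner_le[of _ w] by force

lemma signvec_inner_self:
  fixes a :: "real^'n"
  assumes "a \<in> signvecs" shows "a \<bullet> a = real CARD('n)"
proof -
  have "a$j * a$j = 1" for j
    using assms by (auto simp: signvecs_def elim!: allE[of _ j])
  then show ?thesis by (simp add: inner_vec_def)
qed

text \<open>Two distinct sign vectors disagree in some coordinate, contributing -1 to their inner product.\<close>
lemma signvec_inner_distinct:
  fixes a b :: "real^'n"
  assumes a: "a \<in> signvecs" and b: "b \<in> signvecs" and "b \<noteq> a"
  shows "b \<bullet> a \<le> real CARD('n) - 2"
proof -
  obtain j where j: "b$j \<noteq> a$j" using \<open>b \<noteq> a\<close> by (auto simp: vec_eq_iff)
  have pm: "(a$k = 1 \<or> a$k = -1) \<and> (b$k = 1 \<or> b$k = -1)" for k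
    using a b by (simp add: signvecs_def)
  have "b \<bullet> a = b$j * a$j + (\<Sum>k\<in>UNIV - {j}. b$k * a$k)"
    by (simp add: inner_vec_def sum.remove)
  also have "b$j * a$j = -1" using pm[of j] j by auto
  also have "b$k * a$k \<le> 1" for k using pm[of k] by auto
  then have "(\<Sum>k\<in>UNIV - {j}. b$k * a$k) \<le> (\<Sum>k\<in>UNIV - {j}. 1)"
    by (intro sum_mono)
  also have "(\<Sum>k\<in>UNIV - {j}. 1::real) = real CARD('n) - 1"
    by (simp add: card_Diff_singleton of_nat_diff)
  finally show ?thesis by simp
qed

text \<open>pi(a) = (a \<bullet> 1 + N)/2 - 1, since a_i = 1 exactly when (a_i + 1)/2 = 1.\<close>
lemma piv_sum:
  fixes a :: "real^'n"
  assumes "a \<in> signvecs"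
  shows "piv a = (a \<bullet> 1) / 2 + real CARD('n) / 2 - 1"
proof -
  have indicator: "\<And>i. (if a$i = 1 then 1 else 0) = (a$i + 1) / (2::real)"
    using assms by (auto simp: signvecs_def)
  have "real (card {i. a $ i = 1}) = (\<Sum>i\<in>UNIV. if a$i = 1 then 1 else 0)"
    by (simp add: sum.If_cases)
  also have "\<dots> = (\<Sum>i\<in>UNIV. (a$i + 1) / 2)" by (simp only: indicator)
  also have "\<dots> = (a \<bullet> 1) / 2 + real CARD('n) / 2"
    by (simp add: inner_vec_def sum_divide_distrib[symmetric] sum.distrib)
  finally show ?thesis by (simp add: piv_def)
qed

text \<open>The centre of the slice of Q at the height of p.\<close>
definition centre :: "(real^'n) \<times> real \<Rightarrow> real^'n" where
  "centre p = fst p - (snd p / 2) *\<^sub>R 1"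

lemma lhs_centre:
  fixes a :: "real^'n"
  assumes "a \<in> signvecs"
  shows "lhs a p = a \<bullet> centre p - snd p * (real CARD('n) - 2) / 2"
  by (simp add: lhs_def centre_def inner_diff_right piv_sum[OF assms] algebra_simps
      add_divide_distrib diff_divide_distrib)

lemma Qpoly_iff:
  "p \<in> (Qpoly :: ((real^'n) \<times> real) set) \<longleftrightarrow>
     0 \<le> snd p \<and> snd p \<le> 2 \<and> l1norm (centre p) \<le> 1 + snd p * (real CARD('n) - 2) / 2"
proof -
  have "(\<forall>a\<in>signvecs. lhs a p \<le> 1) \<longleftrightarrow>
      (\<forall>a\<in>(signvecs::(real^'n) set). a \<bullet> centre p \<le> 1 + snd p * (real CARD('n) - 2) / 2)"
    by (auto simp: lhs_centre algebra_simps)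
  then show ?thesis unfolding Qpoly_def signvecs_bound_iff by auto
qed

lemma lhs_inner: "lhs a p = (a, - piv a) \<bullet> p"
  by (cases p) (simp add: lhs_def inner_Pair)

lemma Qpoly_halfspaces:
  "(Qpoly :: ((real^'n) \<times> real) set) =
     (\<Inter>a\<in>signvecs. {p. (a, - piv a) \<bullet> p \<le> 1})
       \<inter> {p. (0::real^'n, -1::real) \<bullet> p \<le> 0} \<inter> {p. (0::real^'n, 1::real) \<bullet> p \<le> 2}"
  by (auto simp: Qpoly_def lhs_inner inner_Pair_0)

lemma Qpoly_convex: "convex (Qpoly :: ((real^'n) \<times> real) set)"
  unfolding Qpoly_halfspaces by (intro convex_Int convex_INT convex_halfspace_le)

section \<open>Q is the convex hull of two cross-polytopes\<close>

definition cross_vertices :: "(real^'n) set" where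
  "cross_vertices = {s *\<^sub>R axis i 1 | s i. s = 1 \<or> s = -1}"

lemma finite_cross_vertices: "finite (cross_vertices :: (real^'n) set)"
proof -
  have "(cross_vertices :: (real^'n) set) = (\<lambda>(s,i). s *\<^sub>R axis i 1) ` ({1,-1} \<times> UNIV)"
    by (auto simp: cross_vertices_def image_iff)
  moreover have "finite ({1,-1::real} \<times> (UNIV::'n set))" by simp
  ultimately show ?thesis by (metis finite_imageI)
qed

lemma l1norm_cross_vertex: "y \<in> cross_vertices \<Longrightarrow> l1norm y = 1"
  by (auto simp: cross_vertices_def l1norm_scaleR l1norm_axis)

lemma l1_ball_in_cross_hull:
  fixes y :: "real^'n"
  assumes "l1norm y \<le> 1"
  shows "y \<in> convex hull cross_vertices"
proof -
  define N where "N = real CARD('n)"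
  have N: "N > 0" by (simp add: N_def)
  define d where "d = 1 - l1norm y"
  \<comment> \<open>weight of s*u_i: the positive part of s*y_i plus an equal share of the slack d\<close>
  define mu where "mu = (\<lambda>(i::'n, s::real). max (s * y$i) 0 + d / (2*N))"
  define z where "z = (\<lambda>(i::'n, s::real). s *\<^sub>R axis i (1::real) :: real^'n)"
  let ?I = "(UNIV::'n set) \<times> {1, -1::real}"
  have split: "\<And>g::'n\<times>real\<Rightarrow>'b::comm_monoid_add. sum g ?I = (\<Sum>i\<in>UNIV. g (i,1) + g (i,-1))"
    by (simp add: sum.cartesian_product')
  have "(\<Sum>j\<in>?I. mu j *\<^sub>R z j) \<in> convex hull cross_vertices"
  proof (rule convex_sum)
    have "sum mu ?I = (\<Sum>i\<in>UNIV. \<bar>y$i\<bar> + d / N)"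
      unfolding split by (intro sum.cong) (auto simp: mu_def)
    also have "\<dots> = l1norm y + d" using N by (simp add: sum.distrib l1norm_def N_def)
    finally show "sum mu ?I = 1" by (simp add: d_def)
    show "\<And>i. i \<in> ?I \<Longrightarrow> 0 \<le> mu i" using N assms by (auto simp: mu_def d_def)
    show "\<And>i. i \<in> ?I \<Longrightarrow> z i \<in> convex hull cross_vertices"
      by (rule hull_inc) (auto simp: z_def cross_vertices_def)
  qed simp_all
  moreover have "(\<Sum>j\<in>?I. mu j *\<^sub>R z j) = y"
  proof -
    have "mu (i,1) *\<^sub>R z (i,1) + mu (i,-1) *\<^sub>R z (i,-1) = y$i *\<^sub>R axis i 1" for i
    proof -
      have "mu (i,1) - mu (i,-1) = y$i" by (simp add: mu_def)
      then show ?thesis by (simp add: z_def scaleR_diff_left[symmetric] algebra_simps)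
    qed
    then have "(\<Sum>j\<in>?I. mu j *\<^sub>R z j) = (\<Sum>i\<in>UNIV. y$i *\<^sub>R axis i (1::real))"
      unfolding split by simp
    also have "\<dots> = y" using basis_expansion[of y] by (simp add: scalar_mult_eq_scaleR)
    finally show ?thesis .
  qed
  ultimately show ?thesis by simp
qed

definition lift_bottom :: "real^'n \<Rightarrow> (real^'n) \<times> real" where
  "lift_bottom y = (y, 0)"

definition lift_top :: "real^'n \<Rightarrow> (real^'n) \<times> real" where
  "lift_top y = (vec 1 + (real CARD('n) - 1) *\<^sub>R y, 2)"

text \<open>Both embeddings are affine, hence commute with convex hulls.\<close>
lemma hull_lift_bottom: "convex hull (lift_bottom ` S) = lift_bottom ` (convex hull S)"
  by (rule convex_hull_linear_image[symmetric]) (simp add: linear_iff lift_bottom_def)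

lemma hull_lift_top:
  "convex hull (lift_top ` S) = lift_top ` (convex hull (S :: (real^'n) set))"
proof -
  have lift: "(lift_top :: real^'n \<Rightarrow> _) =
      (\<lambda>z. (vec 1, 2) + (real CARD('n) - 1) *\<^sub>R z) \<circ> lift_bottom"
    by (simp add: fun_eq_iff lift_top_def lift_bottom_def)
  show ?thesis
    unfolding lift image_comp[symmetric] convex_hull_affinity hull_lift_bottom ..
qed

definition bottom_vertices :: "((real^'n) \<times> real) set" where
  "bottom_vertices = lift_bottom ` cross_vertices"

definition top_vertices :: "((real^'n) \<times> real) set" where
  "top_vertices = lift_top ` cross_vertices"

lemma bottom_vertices_explicit:
  "(bottom_vertices :: ((real^'n) \<times> real) set) = {(s *\<^sub>R axis i 1, 0) | s i. s = 1 \<or> s = -1}"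
  by (auto simp: bottom_vertices_def cross_vertices_def lift_bottom_def)

lemma top_vertices_explicit:
  "(top_vertices :: ((real^'n) \<times> real) set) =
     {(vec 1 + (s * (real CARD('n) - 1)) *\<^sub>R axis i 1, 2) | s i. s = 1 \<or> s = -1}"
proof -
  have lift_axis: "lift_top (s *\<^sub>R axis i 1) = (vec 1 + (s * (real CARD('n) - 1)) *\<^sub>R axis i 1, 2)"
    for s and i :: 'n
    by (simp add: lift_top_def mult.commute)
  have "(top_vertices :: ((real^'n) \<times> real) set) = {lift_top (s *\<^sub>R axis i 1) | s i. s = 1 \<or> s = -1}"
    unfolding top_vertices_def cross_vertices_def by blast
  also have "\<dots> = {(vec 1 + (s * (real CARD('n) - 1)) *\<^sub>R axis i 1, 2) | s i. s = 1 \<or> s = -1}"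
    by (simp only: lift_axis)
  finally show ?thesis .
qed

lemma lift_bottom_in_Qpoly_iff:
  "lift_bottom y \<in> (Qpoly :: ((real^'n) \<times> real) set) \<longleftrightarrow> l1norm y \<le> 1"
  by (simp add: Qpoly_iff lift_bottom_def centre_def)

lemma lift_top_in_Qpoly_iff:
  assumes "CARD('n) \<ge> 2"
  shows "lift_top y \<in> (Qpoly :: ((real^'n) \<times> real) set) \<longleftrightarrow> l1norm y \<le> 1"
proof -
  have centre_top: "centre (lift_top y) = (real CARD('n) - 1) *\<^sub>R y"
    by (simp add: centre_def lift_top_def)
  have radius_top: "1 + snd (lift_top y) * (real CARD('n) - 2) / 2 = real CARD('n) - 1"
    by (simp add: lift_top_def field_simps)
  show ?thesis
    unfolding Qpoly_iff centre_top l1norm_scaleR radius_top using assms by (simp add: lift_top_def)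
qed

lemma vertices_in_Qpoly:
  assumes "CARD('n) \<ge> 2"
  shows "bottom_vertices \<union> top_vertices \<subseteq> (Qpoly :: ((real^'n) \<times> real) set)"
proof -
  have "lift_bottom y \<in> Qpoly \<and> lift_top y \<in> (Qpoly :: ((real^'n) \<times> real) set)"
    if "y \<in> cross_vertices" for y
    by (simp add: l1norm_cross_vertex[OF that] lift_bottom_in_Qpoly_iff lift_top_in_Qpoly_iff[OF assms])
  then show ?thesis by (auto simp: bottom_vertices_def top_vertices_def)
qed

text \<open>Every point p = (x,t) of Q is the convex combination with weights 1 - t/2 and t/2 of
  lift_bottom y and lift_top y for a single y in the l1 unit ball, namely
  y = centre p / (1 + t(N-2)/2).\<close>
lemma Qpoly_decomposition:
  assumes n2: "CARD('n) \<ge> 2" and p: "p \<in> (Qpoly :: ((real^'n) \<times> real) set)"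
  obtains y where "l1norm y \<le> 1"
    and "p = (1 - snd p / 2) *\<^sub>R lift_bottom y + (snd p / 2) *\<^sub>R lift_top y"
proof
  define t where "t = snd p"
  define r where "r = 1 + t * (real CARD('n) - 2) / 2"
  define y where "y = (1 / r) *\<^sub>R centre p"
  have t: "0 \<le> t" and slice: "l1norm (centre p) \<le> r"
    using p by (auto simp: Qpoly_iff t_def r_def)
  have r: "r \<ge> 1" using t n2 by (simp add: r_def)
  show "l1norm y \<le> 1" using slice r by (simp add: y_def l1norm_scaleR field_simps)
  have coef: "(1 - t/2) + t/2 * (real CARD('n) - 1) = r" by (simp add: r_def field_simps)
  have "(1 - t/2) *\<^sub>R y + (t/2) *\<^sub>R (vec 1 + (real CARD('n) - 1) *\<^sub>R y)
      = (1 - t/2) *\<^sub>R y + (t/2) *\<^sub>R ((real CARD('n) - 1) *\<^sub>R y) + (t/2) *\<^sub>R vec 1"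
    by (simp only: scaleR_add_right add_ac)
  also have "\<dots> = ((1 - t/2) + t/2 * (real CARD('n) - 1)) *\<^sub>R y + (t/2) *\<^sub>R vec 1"
    by (simp only: scaleR_add_left scaleR_scaleR)
  also have "\<dots> = r *\<^sub>R y + (t/2) *\<^sub>R vec 1" by (simp only: coef)
  also have "r *\<^sub>R y = centre p" using r by (simp add: y_def)
  also have "centre p + (t/2) *\<^sub>R vec 1 = fst p" by (simp add: centre_def t_def)
  finally show "p = (1 - snd p / 2) *\<^sub>R lift_bottom y + (snd p / 2) *\<^sub>R lift_top y"
    by (simp add: lift_bottom_def lift_top_def prod_eq_iff t_def)
qed

lemma Qpoly_eq_hull:
  assumes n2: "CARD('n) \<ge> 2"
  shows "(Qpoly :: ((real^'n) \<times> real) set) = convex hull (bottom_vertices \<union> top_vertices)"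
proof
  show "convex hull (bottom_vertices \<union> top_vertices) \<subseteq> (Qpoly :: ((real^'n) \<times> real) set)"
    using vertices_in_Qpoly[OF n2] Qpoly_convex by (rule hull_minimal)
next
  let ?H = "convex hull (bottom_vertices \<union> top_vertices) :: ((real^'n) \<times> real) set"
  show "Qpoly \<subseteq> ?H"
  proof
    fix p :: "(real^'n) \<times> real" assume p: "p \<in> Qpoly"
    then obtain y where "l1norm y \<le> 1"
      and p_eq: "p = (1 - snd p / 2) *\<^sub>R lift_bottom y + (snd p / 2) *\<^sub>R lift_top y"
      by (rule Qpoly_decomposition[OF n2])
    then have "y \<in> convex hull cross_vertices" by (intro l1_ball_in_cross_hull)
    then have "lift_bottom y \<in> convex hull bottom_vertices" "lift_top y \<in> convex hull top_vertices"
      by (simp_all add: bottom_vertices_def top_vertices_def hull_lift_bottom hull_lift_top)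
    moreover have "convex hull bottom_vertices \<subseteq> ?H" "convex hull top_vertices \<subseteq> ?H"
      by (simp_all add: hull_mono)
    moreover have "0 \<le> snd p" "snd p \<le> 2" using p by (simp_all add: Qpoly_def)
    ultimately show "p \<in> ?H"
      by (subst p_eq, intro convexD convex_convex_hull) auto
  qed
qed

lemma Qpoly_polytope:
  assumes "CARD('n) \<ge> 2"
  shows "polytope (Qpoly :: ((real^'n) \<times> real) set)"
  unfolding Qpoly_eq_hull[OF assms]
  by (intro polytope_convex_hull) (simp add: bottom_vertices_def top_vertices_def finite_cross_vertices)

section \<open>The vertices of Q\<close>

lemma strictly_exposed_not_in_hull:
  fixes c v :: "'a::real_inner"
  assumes "\<And>u. u \<in> S \<Longrightarrow> u \<noteq> v \<Longrightarrow> c \<bullet> u < c \<bullet> v"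
  shows "v \<notin> convex hull (S - {v})"
proof -
  have "convex hull (S - {v}) \<subseteq> {z. c \<bullet> z < c \<bullet> v}"
    using assms by (intro hull_minimal) (auto intro: convex_halfspace_lt)
  then show ?thesis by auto
qed

lemma cross_vertex_inner_self:
  assumes "e \<in> (cross_vertices :: (real^'n) set)"
  shows "e \<bullet> e = 1"
  using assms by (auto simp: cross_vertices_def inner_axis_axis)

lemma cross_vertex_inner_distinct:
  assumes "e \<in> (cross_vertices :: (real^'n) set)" "e' \<in> cross_vertices" "e \<noteq> e'"
  shows "e \<bullet> e' \<le> 0"
proof -
  obtain s i where e: "e = s *\<^sub>R axis i (1::real)" "s = 1 \<or> s = -1"
    using assms(1) by (auto simp: cross_vertices_def)
  obtain s' i' where e': "e' = s' *\<^sub>R axis i' (1::real)" "s' = 1 \<or> s' = -1"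
    using assms(2) by (auto simp: cross_vertices_def)
  have "e \<bullet> e' = (if i = i' then s * s' else 0)" by (simp add: e e' inner_axis_axis)
  moreover have "i = i' \<Longrightarrow> s \<noteq> s'" using assms(3) by (auto simp: e e')
  ultimately show ?thesis using e(2) e'(2) by auto
qed

lemma cross_vertex_inner_le_one:
  assumes "e \<in> (cross_vertices :: (real^'n) set)" "e' \<in> cross_vertices"
  shows "e \<bullet> e' \<le> 1"
  using assms cross_vertex_inner_self cross_vertex_inner_distinct by fastforce

lemma cross_vertex_inner_one:
  assumes "e \<in> (cross_vertices :: (real^'n) set)"
  shows "\<bar>e \<bullet> 1\<bar> = 1"
  using assms by (auto simp: cross_vertices_def inner_axis')

lemma inner_lift_bottom: "(e, h) \<bullet> lift_bottom y = e \<bullet> y"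
  by (simp add: lift_bottom_def inner_Pair)

lemma inner_lift_top:
  "(e, h) \<bullet> lift_top y = e \<bullet> 1 + (real CARD('n) - 1) * (e \<bullet> (y::real^'n)) + 2 * h"
  by (simp add: lift_top_def inner_Pair inner_add_right)

text \<open>The bottom vertex (e,0) is exposed by the functional (e,-N) and the top vertex
  lift_top e by (e,1).\<close>
lemma bottom_vertex_exposed:
  assumes n2: "CARD('n) \<ge> 2" and v: "v \<in> (bottom_vertices :: ((real^'n) \<times> real) set)"
  shows "v \<notin> convex hull ((bottom_vertices \<union> top_vertices) - {v})"
proof -
  obtain e where e: "e \<in> cross_vertices" and v_eq: "v = lift_bottom e"
    using v by (auto simp: bottom_vertices_def)
  let ?c = "(e, - real CARD('n))"
  have "?c \<bullet> u < ?c \<bullet> v" if "u \<in> bottom_vertices \<union> top_vertices" "u \<noteq> v" for u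
    using that(1) unfolding bottom_vertices_def top_vertices_def
  proof (elim UnE imageE)
    fix e' assume e': "e' \<in> cross_vertices" and u: "u = lift_bottom e'"
    then have "e \<bullet> e' \<le> 0" using that(2) cross_vertex_inner_distinct[OF e e'] by (auto simp: v_eq)
    then show ?thesis using cross_vertex_inner_self[OF e] by (simp add: u v_eq inner_lift_bottom)
  next
    fix e' assume e': "e' \<in> cross_vertices" and u: "u = lift_top e'"
    have "e \<bullet> e' \<le> 1" "e \<bullet> 1 \<le> 1"
      using cross_vertex_inner_le_one[OF e e'] cross_vertex_inner_one[OF e] by auto
    then have "e \<bullet> 1 + (real CARD('n) - 1) * (e \<bullet> e') \<le> 1 + (real CARD('n) - 1) * 1"
      using n2 by (intro add_mono mult_left_mono) auto
    then show ?thesis using n2 cross_vertex_inner_self[OF e]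
      by (simp add: u v_eq inner_lift_bottom inner_lift_top)
  qed
  then show ?thesis by (rule strictly_exposed_not_in_hull)
qed

lemma top_vertex_exposed:
  assumes n2: "CARD('n) \<ge> 2" and v: "v \<in> (top_vertices :: ((real^'n) \<times> real) set)"
  shows "v \<notin> convex hull ((bottom_vertices \<union> top_vertices) - {v})"
proof -
  obtain e where e: "e \<in> cross_vertices" and v_eq: "v = lift_top e"
    using v by (auto simp: top_vertices_def)
  let ?c = "(e, 1::real)"
  have c_v: "?c \<bullet> v = e \<bullet> 1 + real CARD('n) + 1"
    using cross_vertex_inner_self[OF e] by (simp add: v_eq inner_lift_top)
  have "?c \<bullet> u < ?c \<bullet> v" if "u \<in> bottom_vertices \<union> top_vertices" "u \<noteq> v" for u
    using that(1) unfolding bottom_vertices_def top_vertices_def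
  proof (elim UnE imageE)
    fix e' assume e': "e' \<in> cross_vertices" and u: "u = lift_bottom e'"
    have "e \<bullet> e' \<le> 1" "-1 \<le> e \<bullet> 1"
      using cross_vertex_inner_le_one[OF e e'] cross_vertex_inner_one[OF e] by auto
    then show ?thesis using n2 by (simp add: c_v u inner_lift_bottom)
  next
    fix e' assume e': "e' \<in> cross_vertices" and u: "u = lift_top e'"
    then have "e \<bullet> e' \<le> 0" using that(2) cross_vertex_inner_distinct[OF e e'] by (auto simp: v_eq)
    then have "(real CARD('n) - 1) * (e \<bullet> e') \<le> 0" using n2 by (simp add: mult_nonneg_nonpos)
    then show ?thesis using n2 by (simp add: c_v u inner_lift_top)
  qed
  then show ?thesis by (rule strictly_exposed_not_in_hull)
qed

text \<open>Since no claimed vertex is a convex combination of the others, the extreme points of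
  Q = conv(bottom_vertices \<union> top_vertices) are exactly the claimed vertices.\<close>
lemma Qpoly_extreme_point_iff:
  assumes n2: "CARD('n) \<ge> 2"
  shows "v extreme_point_of (Qpoly :: ((real^'n) \<times> real) set) \<longleftrightarrow>
           v \<in> bottom_vertices \<union> top_vertices"
proof -
  have "finite (bottom_vertices \<union> top_vertices :: ((real^'n) \<times> real) set)"
    by (simp add: bottom_vertices_def top_vertices_def finite_cross_vertices)
  then show ?thesis
    unfolding Qpoly_eq_hull[OF n2]
    using bottom_vertex_exposed[OF n2] top_vertex_exposed[OF n2]
    by (intro extreme_point_of_convex_hull_convex_independent finite_imp_compact) blast+
qed

lemma cross_vertex_integral:
  assumes "y \<in> (cross_vertices :: (real^'n) set)"
  shows "y $ j \<in> \<int>"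
  using assms by (auto simp: cross_vertices_def axis_def)

lemma vertices_integral:
  assumes "v \<in> (bottom_vertices \<union> top_vertices :: ((real^'n) \<times> real) set)"
  shows "integral_pt v"
proof -
  obtain y where y: "y \<in> cross_vertices" and "v = lift_bottom y \<or> v = lift_top y"
    using assms by (auto simp: bottom_vertices_def top_vertices_def)
  moreover have "real CARD('n) - 1 \<in> \<int>" by simp
  ultimately show ?thesis using cross_vertex_integral[OF y]
    by (auto simp: lift_bottom_def lift_top_def integral_pt_def intro!: Ints_add Ints_mult)
qed

section \<open>No integral point in the interior\<close>

definition strict_region :: "(real^'n) set \<Rightarrow> real \<Rightarrow> real \<Rightarrow> ((real^'n) \<times> real) set" where
  "strict_region B lo hi = {p. (\<forall>b\<in>B. lhs b p < 1) \<and> lo < snd p \<and> snd p < hi}"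

lemma open_strict_region:
  assumes "finite B"
  shows "open (strict_region B lo hi)"
proof -
  have "strict_region B lo hi = (\<Inter>b\<in>B. {p. (b, - piv b) \<bullet> p < 1}) \<inter> {p. lo < snd p} \<inter> {p. snd p < hi}"
    by (auto simp: strict_region_def lhs_inner)
  then show ?thesis
    using assms by (auto intro!: open_Int open_INT open_halfspace_lt open_Collect_less continuous_intros)
qed

lemma interior_in_open_halfspace:
  assumes "c \<noteq> 0" "S \<subseteq> {x. c \<bullet> x \<le> \<beta>}"
  shows "interior S \<subseteq> {x. c \<bullet> x < \<beta>}"
  using interior_mono[OF assms(2)] interior_halfspace_le[OF assms(1)] by simp

lemma interior_Qpoly: "interior (Qpoly :: ((real^'n) \<times> real) set) = strict_region signvecs 0 2"
proof
  show "strict_region signvecs 0 2 \<subseteq> interior (Qpoly :: ((real^'n) \<times> real) set)"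
    by (intro interior_maximal open_strict_region finite_signvecs)
      (auto simp: strict_region_def Qpoly_def less_imp_le)
  have "interior Qpoly \<subseteq> {p. (a, - piv a) \<bullet> p < 1}" if "a \<in> signvecs" for a :: "real^'n"
    using that signvec_nonzero[OF that]
    by (intro interior_in_open_halfspace) (auto simp: Qpoly_def lhs_inner zero_prod_def)
  moreover have "interior Qpoly \<subseteq> {p. (0::real^'n, -1::real) \<bullet> p < 0}"
    by (intro interior_in_open_halfspace) (auto simp: Qpoly_def inner_Pair_0 zero_prod_def)
  moreover have "interior Qpoly \<subseteq> {p. (0::real^'n, 1::real) \<bullet> p < 2}"
    by (intro interior_in_open_halfspace) (auto simp: Qpoly_def inner_Pair_0 zero_prod_def)
  ultimately show "interior (Qpoly :: ((real^'n) \<times> real) set) \<subseteq> strict_region signvecs 0 2"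
    by (auto simp: strict_region_def lhs_inner inner_Pair_0)
qed

text \<open>Q is full-dimensional: (0,1/2) satisfies all inequalities strictly.\<close>
lemma interior_Qpoly_nonempty: "interior (Qpoly :: ((real^'n) \<times> real) set) \<noteq> {}"
proof -
  have "lhs b (0::real^'n, 1/2) < 1" for b :: "real^'n"
    by (simp add: lhs_def piv_def)
  then have "(0, 1/2) \<in> (strict_region signvecs 0 2 :: ((real^'n) \<times> real) set)"
    by (simp add: strict_region_def)
  then show ?thesis unfolding interior_Qpoly by blast
qed

text \<open>An integral interior point has height 1 and every coordinate of its centre is \<plusminus>1/2 or
  further from 0; hence the inequality of the sign vector of its centre is not strict.\<close>
lemma no_integral_point_in_interior:
  assumes p: "p \<in> interior (Qpoly :: ((real^'n) \<times> real) set)" and int: "integral_pt p"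
  shows False
proof -
  have strict: "\<forall>b\<in>signvecs. lhs b p < 1" "0 < snd p" "snd p < 2"
    using p by (auto simp: interior_Qpoly strict_region_def)
  obtain k where "snd p = of_int k" using int by (auto simp: integral_pt_def elim: Ints_cases)
  with strict have t1: "snd p = 1" by simp
  have half: "\<bar>centre p $ j\<bar> \<ge> 1/2" for j
  proof -
    obtain m where "fst p $ j = of_int m" using int by (auto simp: integral_pt_def elim: Ints_cases)
    then show ?thesis by (cases "m \<ge> 1") (auto simp: centre_def t1)
  qed
  have "real CARD('n) / 2 = (\<Sum>j\<in>(UNIV::'n set). 1/2)" by simp
  also have "\<dots> \<le> l1norm (centre p)" unfolding l1norm_def by (rule sum_mono) (rule half)
  finally have "lhs (sgnv (centre p)) p \<ge> 1"
    by (simp add: lhs_centre[OF sgnv_signvec] sgnv_inner t1 field_simps)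
  moreover have "lhs (sgnv (centre p)) p < 1" using strict(1) sgnv_signvec[of "centre p"] by blast
  ultimately show False by simp
qed

section \<open>Facets and their integral relative interior points\<close>

lemma supporting_hyperplane_facet:
  fixes S :: "'a::euclidean_space set"
  assumes S: "convex S" "interior S \<noteq> {}"
    and c: "c \<noteq> 0" and supp: "\<forall>x\<in>S. c \<bullet> x \<le> \<beta>"
    and T: "open T" "p \<in> T" "c \<bullet> p = \<beta>" "T \<inter> {x. c \<bullet> x = \<beta>} \<subseteq> S"
  shows "{x\<in>S. c \<bullet> x = \<beta>} facet_of S \<and> p \<in> rel_interior {x\<in>S. c \<bullet> x = \<beta>}"
proof -
  let ?H = "{x. c \<bullet> x = \<beta>}"
  let ?F = "{x\<in>S. c \<bullet> x = \<beta>}"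
  have face: "?F face_of S"
    using face_of_Int_supporting_hyperplane_le[OF S(1), of c \<beta>] supp by (simp add: Int_def conj_commute)
  have pF: "p \<in> ?F" using T by blast
  have dim_S: "aff_dim S = int DIM('a)" by (rule aff_dim_nonempty_interior[OF S(2)])
  have dim_H: "aff_dim ?H = int DIM('a) - 1"
    using aff_dim_hyperplane[OF c, of \<beta>] by (simp add: of_nat_diff DIM_positive Suc_leI)
  have "aff_dim (?H \<inter> T) = aff_dim ?H"
    by (rule aff_dim_convex_Int_open) (use T convex_hyperplane in auto)
  moreover have "aff_dim (?H \<inter> T) \<le> aff_dim ?F" "aff_dim ?F \<le> aff_dim ?H"
    using T by (auto intro!: aff_dim_subset)
  ultimately have "aff_dim ?F = aff_dim S - 1" using dim_S dim_H by linarith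
  then have facet: "?F facet_of S" unfolding facet_of_def using face pF by auto
  obtain e where e: "e > 0" "ball p e \<subseteq> T" using T open_contains_ball by blast
  have "affine hull ?F \<subseteq> ?H" by (rule hull_minimal) (auto simp: affine_hyperplane)
  then have "ball p e \<inter> affine hull ?F \<subseteq> ?F" using e T by blast
  then have "p \<in> rel_interior ?F" unfolding mem_rel_interior_ball using pF e by blast
  with facet show ?thesis by blast
qed

text \<open>The witness for the facet of the sign vector a: the 0/1 vector marking the positive
  coordinates of a, at height 1.  Its centre is a/2.\<close>
definition sign_witness :: "real^'n \<Rightarrow> (real^'n) \<times> real" where
  "sign_witness a = ((\<chi> j. (a$j + 1) / 2), 1)"

lemma sign_witness_properties:
  fixes a :: "real^'n"
  assumes a: "a \<in> signvecs"
  shows "sign_witness a \<in> Qpoly \<and> integral_pt (sign_witness a) \<and> lhs a (sign_witness a) = 1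
    \<and> (\<forall>b\<in>signvecs. b \<noteq> a \<longrightarrow> lhs b (sign_witness a) < 1)
    \<and> 0 < snd (sign_witness a) \<and> snd (sign_witness a) < 2"
proof -
  let ?w = "sign_witness a"
  have centre_w: "centre ?w = (1/2) *\<^sub>R a"
    by (simp add: sign_witness_def centre_def vec_eq_iff field_simps)
  have height_w: "snd ?w = 1" by (simp add: sign_witness_def)
  have lhs_w: "lhs b ?w = (b \<bullet> a - real CARD('n) + 2) / 2" if "b \<in> signvecs" for b
    unfolding lhs_centre[OF that] centre_w height_w by (simp add: field_simps)
  have eq: "lhs a ?w = 1" using lhs_w[OF a] signvec_inner_self[OF a] by simp
  have lt: "lhs b ?w < 1" if "b \<in> signvecs" "b \<noteq> a" for b
    using lhs_w[OF that(1)] signvec_inner_distinct[OF a that] by simp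
  have "?w \<in> Qpoly" using eq lt by (force simp: Qpoly_def sign_witness_def)
  moreover have "(a$j + 1) / 2 \<in> \<int>" for j
  proof -
    have "a$j = 1 \<or> a$j = -1" using a by (simp add: signvecs_def)
    then show ?thesis by auto
  qed
  then have "integral_pt ?w" by (simp add: integral_pt_def sign_witness_def)
  ultimately show ?thesis using eq lt by (simp add: sign_witness_def)
qed

lemma bottom_witness:
  "\<exists>p \<in> (Qpoly :: ((real^'n) \<times> real) set). integral_pt p
     \<and> (\<forall>b \<in> signvecs. lhs b p < 1) \<and> snd p = 0"
  by (rule bexI[of _ "(0, 0)"]) (simp_all add: Qpoly_def lhs_def integral_pt_def)

lemma lhs_top_point:
  fixes b :: "real^'n"
  assumes "CARD('n) \<ge> 2" "b \<in> signvecs"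
  shows "lhs b (vec 1, 2) < 1"
proof -
  have "lhs b (vec 1, 2) = 2 - real CARD('n)"
    by (simp add: lhs_centre[OF assms(2)] centre_def field_simps)
  then show ?thesis using assms(1) by simp
qed

lemma top_witness:
  assumes "CARD('n) \<ge> 2"
  shows "\<exists>p \<in> (Qpoly :: ((real^'n) \<times> real) set). integral_pt p
     \<and> (\<forall>b \<in> signvecs. lhs b p < 1) \<and> snd p = 2"
  using lhs_top_point[OF assms]
  by (intro bexI[of _ "(vec 1, 2)"]) (simp_all add: Qpoly_def integral_pt_def less_imp_le)

text \<open>Each defining inequality defines a facet of Q containing an integral point in its relative
  interior; the strict region of the remaining inequalities is the required neighbourhood.\<close>
lemma sign_facet:
  fixes a :: "real^'n"
  assumes a: "a \<in> signvecs"
  shows "{p \<in> Qpoly. lhs a p = 1} facet_of Qpoly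
    \<and> (\<exists>p \<in> rel_interior {p \<in> Qpoly. lhs a p = 1}. integral_pt p)"
proof -
  have "{p \<in> Qpoly. (a, - piv a) \<bullet> p = 1} facet_of Qpoly
    \<and> sign_witness a \<in> rel_interior {p \<in> Qpoly. (a, - piv a) \<bullet> p = 1}"
  proof (rule supporting_hyperplane_facet[OF Qpoly_convex interior_Qpoly_nonempty])
    let ?T = "strict_region (signvecs - {a}) 0 2"
    show "open ?T" by (simp add: open_strict_region finite_signvecs)
    show "sign_witness a \<in> ?T" "(a, - piv a) \<bullet> sign_witness a = 1"
      using sign_witness_properties[OF a] by (auto simp: strict_region_def lhs_inner)
    show "?T \<inter> {x. (a, - piv a) \<bullet> x = 1} \<subseteq> Qpoly"
      by (auto simp: strict_region_def Qpoly_def lhs_inner intro: less_imp_le)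
  qed (use a signvec_nonzero in \<open>auto simp: Qpoly_def lhs_inner zero_prod_def\<close>)
  then show ?thesis using sign_witness_properties[OF a] unfolding lhs_inner by blast
qed

lemma bottom_facet:
  "{p \<in> (Qpoly :: ((real^'n) \<times> real) set). snd p = 0} facet_of Qpoly
     \<and> (\<exists>p \<in> rel_interior {p \<in> (Qpoly :: ((real^'n) \<times> real) set). snd p = 0}. integral_pt p)"
proof -
  let ?c = "(0::real^'n, -1::real)"
  have hyperplane_eq: "{p \<in> (Qpoly :: ((real^'n) \<times> real) set). snd p = 0} = {x \<in> Qpoly. ?c \<bullet> x = 0}"
    by (auto simp: inner_Pair_0)
  have "{x \<in> Qpoly. ?c \<bullet> x = 0} facet_of Qpoly \<and> (0, 0) \<in> rel_interior {x \<in> Qpoly. ?c \<bullet> x = 0}"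
  proof (rule supporting_hyperplane_facet[OF Qpoly_convex interior_Qpoly_nonempty])
    let ?T = "strict_region signvecs (-1) 2 :: ((real^'n) \<times> real) set"
    show "open ?T" by (simp add: open_strict_region finite_signvecs)
    show "(0, 0) \<in> ?T" by (simp add: strict_region_def lhs_def)
    show "?T \<inter> {x. ?c \<bullet> x = 0} \<subseteq> Qpoly"
      by (auto simp: strict_region_def Qpoly_def inner_Pair_0 intro: less_imp_le)
  qed (auto simp: Qpoly_def inner_Pair_0 zero_prod_def)
  moreover have "integral_pt (0::real^'n, 0::real)" by (simp add: integral_pt_def)
  ultimately show ?thesis unfolding hyperplane_eq by blast
qed

lemma top_facet:
  assumes "CARD('n) \<ge> 2"
  shows "{p \<in> (Qpoly :: ((real^'n) \<times> real) set). snd p = 2} facet_of Qpoly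
     \<and> (\<exists>p \<in> rel_interior {p \<in> (Qpoly :: ((real^'n) \<times> real) set). snd p = 2}. integral_pt p)"
proof -
  let ?c = "(0::real^'n, 1::real)"
  have hyperplane_eq: "{p \<in> (Qpoly :: ((real^'n) \<times> real) set). snd p = 2} = {x \<in> Qpoly. ?c \<bullet> x = 2}"
    by (auto simp: inner_Pair_0)
  have "{x \<in> Qpoly. ?c \<bullet> x = 2} facet_of Qpoly \<and> (vec 1, 2) \<in> rel_interior {x \<in> Qpoly. ?c \<bullet> x = 2}"
  proof (rule supporting_hyperplane_facet[OF Qpoly_convex interior_Qpoly_nonempty])
    let ?T = "strict_region signvecs 0 3 :: ((real^'n) \<times> real) set"
    show "open ?T" by (simp add: open_strict_region finite_signvecs)
    show "(vec 1, 2) \<in> ?T" using lhs_top_point[OF assms] by (simp add: strict_region_def)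
    show "?T \<inter> {x. ?c \<bullet> x = 2} \<subseteq> Qpoly"
      by (auto simp: strict_region_def Qpoly_def inner_Pair_0 intro: less_imp_le)
  qed (auto simp: Qpoly_def inner_Pair_0 zero_prod_def)
  moreover have "integral_pt (vec 1::real^'n, 2::real)" by (simp add: integral_pt_def)
  ultimately show ?thesis unfolding hyperplane_eq by blast
qed

theorem mainTheorem6:
  assumes "CARD('n) \<ge> 2"
  shows "(polytope (Qpoly :: ((real^'n) \<times> real) set))
    \<and> (\<forall>v. v extreme_point_of (Qpoly :: ((real^'n) \<times> real) set) \<longrightarrow> integral_pt v)
    \<and> ({v. v extreme_point_of (Qpoly :: ((real^'n) \<times> real) set) \<and> snd v = 0}
           = {(s *\<^sub>R axis i 1, 0) | s i. s = 1 \<or> s = -1})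
    \<and> ({v. v extreme_point_of (Qpoly :: ((real^'n) \<times> real) set) \<and> snd v = 2}
           = {(vec 1 + (s * (real CARD('n) - 1)) *\<^sub>R axis i 1, 2) | s i. s = 1 \<or> s = -1})
    \<and> (\<forall>p \<in> interior (Qpoly :: ((real^'n) \<times> real) set). \<not> integral_pt p)
    \<and> (\<forall>a \<in> (signvecs :: (real^'n) set). \<exists>p \<in> Qpoly. integral_pt p \<and> lhs a p = 1
           \<and> (\<forall>b \<in> signvecs. b \<noteq> a \<longrightarrow> lhs b p < 1) \<and> 0 < snd p \<and> snd p < 2)
    \<and> (\<exists>p \<in> (Qpoly :: ((real^'n) \<times> real) set). integral_pt p
           \<and> (\<forall>b \<in> signvecs. lhs b p < 1) \<and> snd p = 0)
    \<and> (\<exists>p \<in> (Qpoly :: ((real^'n) \<times> real) set). integral_pt p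
           \<and> (\<forall>b \<in> signvecs. lhs b p < 1) \<and> snd p = 2)
    \<and> (\<forall>a \<in> (signvecs :: (real^'n) set).
           {p \<in> Qpoly. lhs a p = 1} facet_of Qpoly
           \<and> (\<exists>p \<in> rel_interior {p \<in> Qpoly. lhs a p = 1}. integral_pt p))
    \<and> ({p \<in> (Qpoly :: ((real^'n) \<times> real) set). snd p = 0} facet_of Qpoly
           \<and> (\<exists>p \<in> rel_interior {p \<in> (Qpoly :: ((real^'n) \<times> real) set). snd p = 0}. integral_pt p))
    \<and> ({p \<in> (Qpoly :: ((real^'n) \<times> real) set). snd p = 2} facet_of Qpoly
           \<and> (\<exists>p \<in> rel_interior {p \<in> (Qpoly :: ((real^'n) \<times> real) set). snd p = 2}. integral_pt p))"
proof -
  let ?Q = "Qpoly :: ((real^'n) \<times> real) set"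
  note extreme = Qpoly_extreme_point_iff[OF assms]
  have "\<forall>v\<in>bottom_vertices. snd v = (0::real)" "\<forall>v\<in>top_vertices. snd v = (2::real)"
    by (auto simp: bottom_vertices_def top_vertices_def lift_bottom_def lift_top_def)
  then have bottom: "{v. v extreme_point_of ?Q \<and> snd v = 0} = bottom_vertices"
    and top: "{v. v extreme_point_of ?Q \<and> snd v = 2} = top_vertices"
    by (auto simp: extreme)
  show ?thesis
    unfolding bottom top bottom_vertices_explicit[symmetric] top_vertices_explicit[symmetric]
    using Qpoly_polytope[OF assms] extreme vertices_integral no_integral_point_in_interior
      sign_witness_properties bottom_witness top_witness[OF assms]
      sign_facet bottom_facet top_facet[OF assms]
    by (intro conjI) blast+
qed

end
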